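(* Let $n\ge 3$ and consider the Markov chain on $\{0,1,\dots,n-1\}$ with $n\times n$ transition probability matrix $\mathbf P=(P_{ij})$ given by: $P_{00}=5/6$, $P_{01}=1/6$; $P_{10}=5/6$, $P_{12}=1/6$; for $2\le i\le n-2$: $P_{i0}=2/3$, $P_{i,i-1}=1/6$, $P_{i,i+1}=1/6$; $P_{n-1,0}=2/3$, $P_{n-1,n-2}=1/6$, $P_{n-1,n-1}=1/6$; all other entries $0$. Then the steady state probability vector $\vec\pi=(\pi_0,\dots,\pi_{n-1})$ (the unique probability vector with $\vec\pi=\vec\pi\mathbf P$) is given by $$\pi_i=\frac{B_{n-i}-B_{n-i-1}}{B_n},\qquad i=0,1,\dots,n-1.$$
   Context: The balancing numbers $B_m$ are defined by $B_0=0$, $B_1=1$, $B_{m+1}=6B_m-B_{m-1}$. *)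

theory Defs
  imports Main "HOL.Real"
begin

fun balancing :: "nat \<Rightarrow> int" where
  "balancing 0 = 0"
| "balancing (Suc 0) = 1"
| "balancing (Suc (Suc m)) = 6 * balancing (Suc m) - balancing m"

definition trans_P :: "nat \<Rightarrow> nat \<Rightarrow> nat \<Rightarrow> real" where
  "trans_P n i j =
     (if i = 0 then (if j = 0 then 5/6 else if j = 1 then 1/6 else 0)
      else if i = 1 then (if j = 0 then 5/6 else if j = 2 then 1/6 else 0)
      else if 2 \<le> i \<and> i \<le> n - 2 then
        (if j = 0 then 2/3 else if j = i - 1 then 1/6 else if j = i + 1 then 1/6 else 0)
      else if i = n - 1 then
        (if j = 0 then 2/3 else if j = n - 2 then 1/6 else if j = n - 1 then 1/6 else 0)
      else 0)"

definition stationary_prob :: "nat \<Rightarrow> (nat \<Rightarrow> nat \<Rightarrow> real) \<Rightarrow> (nat \<Rightarrow> real) \<Rightarrow> bool" where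
  "stationary_prob n P \<pi> \<longleftrightarrow>
     (\<forall>i<n. \<pi> i \<ge> 0) \<and> (\<Sum>i<n. \<pi> i) = 1 \<and>
     (\<forall>j<n. \<pi> j = (\<Sum>i<n. \<pi> i * P i j))"

end

theory Submission
  imports Defs
begin

text \<open>
  Read column by column, \<open>\<pi> = \<pi> P\<close> says that \<open>6 \<pi> j = \<pi> (j - 1) + \<pi> (j + 1)\<close> for
  \<open>0 < j < n - 1\<close>, that \<open>5 \<pi> (n - 1) = \<pi> (n - 2)\<close>, and (using \<open>\<Sum>i. \<pi> i = 1\<close>) that
  \<open>5 \<pi> 0 = 4 + \<pi> 1\<close>. Solved backwards from state \<open>n - 1\<close>, the first two equations are the
  balancing recurrence for the gaps \<open>B (k + 1) - B k\<close>, which start with 1 and 5; hence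
  \<open>\<pi> (n - 1 - k) = \<pi> (n - 1) (B (k + 1) - B k)\<close>, and since the gaps telescope to \<open>B n\<close>,
  normalisation forces \<open>\<pi> (n - 1) = 1 / B n\<close>. Conversely, this vector satisfies the
  column-0 equation because \<open>B n = 6 B (n - 1) - B (n - 2)\<close>, and it is nonnegative because
  every gap is at least 1.
\<close>

definition balancing_gap :: "nat \<Rightarrow> int" where
  "balancing_gap k = balancing (Suc k) - balancing k"

lemma balancing_gap_0 [simp]: "balancing_gap 0 = 1"
  and balancing_gap_1 [simp]: "balancing_gap (Suc 0) = 5"
  by (simp_all add: balancing_gap_def)

lemma balancing_gap_rec:
  "balancing_gap (Suc (Suc k)) = 6 * balancing_gap (Suc k) - balancing_gap k"
  by (simp add: balancing_gap_def)

lemma sum_balancing_gap: "(\<Sum>k<n. balancing_gap k) = balancing n"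
  by (simp add: balancing_gap_def sum_lessThan_telescope)

lemma sum_balancing_gap_rev: "(\<Sum>i<n. balancing_gap (n - Suc i)) = balancing n"
  by (simp add: sum.nat_diff_reindex sum_balancing_gap)

lemma five_times_balancing_gap_Suc:
  "5 * balancing_gap (Suc m) = 4 * balancing (Suc (Suc m)) + balancing_gap m"
  by (simp add: balancing_gap_def)

lemma balancing_gap_ge_1: "1 \<le> balancing_gap k"
proof -
  have "0 \<le> balancing k \<and> 1 \<le> balancing_gap k"
  proof (induction k)
    case (Suc k)
    have "balancing_gap (Suc k) = 4 * balancing (Suc k) + balancing_gap k"
      by (simp add: balancing_gap_def)
    with Suc show ?case by (simp add: balancing_gap_def)
  qed simp
  then show ?thesis ..
qed

lemma balancing_ge: "int n \<le> balancing n"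
proof -
  have "(\<Sum>k<n. 1) \<le> (\<Sum>k<n. balancing_gap k)"
    by (intro sum_mono balancing_gap_ge_1)
  then show ?thesis by (simp add: sum_balancing_gap)
qed

lemma trans_P_col_0:
  assumes "3 \<le> n" "i < n"
  shows "trans_P n i 0 = 2/3 + (if i = 0 then 1/6 else 0) + (if i = 1 then 1/6 else 0)"
  using assms unfolding trans_P_def by (cases "i \<le> 1") auto

lemma trans_P_col:
  assumes "3 \<le> n" "i < n" "1 \<le> j" "j < n"
  shows "trans_P n i j = (if i = j - 1 then 1/6 else 0) + (if i = j + 1 then 1/6 else 0)
     + (if i = n - 1 \<and> j = n - 1 then 1/6 else 0)"
proof -
  obtain m where n: "n = m + 3"
    using assms(1) by (metis add.commute le_Suc_ex)
  consider "i = 0" | "i = 1" | "2 \<le> i" "i \<le> m + 1" | "i = m + 2"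
    using assms(2) n by linarith
  then show ?thesis
    using assms unfolding trans_P_def n by cases auto
qed

lemma sum_mult_trans_P_col_0:
  assumes "3 \<le> n"
  shows "(\<Sum>i<n. \<pi> i * trans_P n i 0) = 2/3 * (\<Sum>i<n. \<pi> i) + \<pi> 0 / 6 + \<pi> 1 / 6"
proof -
  have "(\<Sum>i<n. \<pi> i * trans_P n i 0)
      = (\<Sum>i<n. 2/3 * \<pi> i + (if i = 0 then \<pi> i / 6 else 0) + (if i = 1 then \<pi> i / 6 else 0))"
    using assms by (intro sum.cong) (simp_all add: trans_P_col_0 distrib_left if_distrib)
  also have "\<dots> = 2/3 * (\<Sum>i<n. \<pi> i) + \<pi> 0 / 6 + \<pi> 1 / 6"
    using assms by (simp add: sum.distrib sum_distrib_left)
  finally show ?thesis .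
qed

lemma sum_mult_trans_P_col:
  assumes "3 \<le> n" "1 \<le> j" "j < n"
  shows "(\<Sum>i<n. \<pi> i * trans_P n i j) = \<pi> (j - 1) / 6 + (if j + 1 < n then \<pi> (j + 1) / 6 else 0)
     + (if j = n - 1 then \<pi> (n - 1) / 6 else 0)"
proof -
  have "(\<Sum>i<n. \<pi> i * trans_P n i j)
      = (\<Sum>i<n. (if i = j - 1 then \<pi> i / 6 else 0) + (if i = j + 1 then \<pi> i / 6 else 0)
          + (if j = n - 1 then (if i = n - 1 then \<pi> i / 6 else 0) else 0))"
    using assms by (intro sum.cong) (simp_all add: trans_P_col distrib_left if_distrib)
  also have "\<dots> = \<pi> (j - 1) / 6 + (if j + 1 < n then \<pi> (j + 1) / 6 else 0)
     + (if j = n - 1 then \<pi> (n - 1) / 6 else 0)"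
    using assms by (simp add: sum.distrib less_imp_diff_less)
  finally show ?thesis .
qed

lemma stationary_prob_trans_P_iff:
  fixes \<pi> :: "nat \<Rightarrow> real"
  assumes "3 \<le> n"
  shows "stationary_prob n (trans_P n) \<pi> \<longleftrightarrow>
    (\<forall>i<n. 0 \<le> \<pi> i) \<and> (\<Sum>i<n. \<pi> i) = 1 \<and> 5 * \<pi> 0 = 4 + \<pi> 1 \<and>
    (\<forall>j. 0 < j \<and> j < n - 1 \<longrightarrow> 6 * \<pi> j = \<pi> (j - 1) + \<pi> (j + 1)) \<and>
    5 * \<pi> (n - 1) = \<pi> (n - 2)"
proof -
  let ?balanced = "\<lambda>j. \<pi> j = (\<Sum>i<n. \<pi> i * trans_P n i j)"
  have split_columns: "(\<forall>j<n. ?balanced j) \<longleftrightarrow>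
      ?balanced 0 \<and> (\<forall>j. 0 < j \<and> j < n - 1 \<longrightarrow> ?balanced j) \<and> ?balanced (n - 1)"
  proof safe
    fix j assume "j < n" "?balanced 0" "\<forall>j. 0 < j \<and> j < n - 1 \<longrightarrow> ?balanced j" "?balanced (n - 1)"
    then show "?balanced j" by (cases "j = 0 \<or> j = n - 1") auto
  qed (use assms in auto)
  have "?balanced 0 \<longleftrightarrow> 5 * \<pi> 0 = 4 + \<pi> 1" if "(\<Sum>i<n. \<pi> i) = 1"
    using sum_mult_trans_P_col_0[OF assms, of \<pi>] that by auto
  moreover have "?balanced j \<longleftrightarrow> 6 * \<pi> j = \<pi> (j - 1) + \<pi> (j + 1)" if "0 < j" "j < n - 1" for j
    using sum_mult_trans_P_col[OF assms, of j \<pi>] that by auto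
  moreover have "?balanced (n - 1) \<longleftrightarrow> 5 * \<pi> (n - 1) = \<pi> (n - 2)"
    using sum_mult_trans_P_col[OF assms, of "n - 1" \<pi>] assms by (auto simp: numeral_2_eq_2)
  ultimately show ?thesis
    unfolding stationary_prob_def split_columns by auto
qed

lemma balance_recurrence_solution:
  fixes \<pi> :: "nat \<Rightarrow> real"
  assumes last: "5 * \<pi> (n - 1) = \<pi> (n - 2)"
    and interior: "\<forall>j. 0 < j \<and> j < n - 1 \<longrightarrow> 6 * \<pi> j = \<pi> (j - 1) + \<pi> (j + 1)"
    and "2 \<le> n" "i < n"
  shows "\<pi> i = \<pi> (n - 1) * of_int (balancing_gap (n - Suc i))"
proof -
  have "\<pi> (n - 1 - k) = \<pi> (n - 1) * of_int (balancing_gap k)" if "k < n" for k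
    using that
  proof (induction k rule: balancing.induct)
    case (3 k)
    define j where "j = n - 2 - k"
    have j: "0 < j" "j < n - 1" and idx: "n - 1 - Suc (Suc k) = j - 1" "n - 1 - Suc k = j" "n - 1 - k = j + 1"
      using "3.prems" unfolding j_def by auto
    have "\<pi> (n - 1 - Suc (Suc k)) = 6 * \<pi> j - \<pi> (j + 1)"
      using interior j unfolding idx by (simp add: algebra_simps)
    also have "\<dots> = \<pi> (n - 1) * (6 * of_int (balancing_gap (Suc k)) - of_int (balancing_gap k))"
      using "3.IH" "3.prems" unfolding idx by (simp add: algebra_simps)
    also have "\<dots> = \<pi> (n - 1) * of_int (balancing_gap (Suc (Suc k)))"
      by (simp add: balancing_gap_rec)
    finally show ?case .
  qed (use last \<open>2 \<le> n\<close> in \<open>simp_all add: numeral_2_eq_2\<close>)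
  from this[of "n - Suc i"] show ?thesis
    using \<open>i < n\<close> by simp
qed

lemma gap_profile_solves_balance_recurrence:
  fixes c :: real
  assumes "2 \<le> n"
  defines "\<pi> \<equiv> \<lambda>i. c * of_int (balancing_gap (n - Suc i))"
  shows "5 * \<pi> (n - 1) = \<pi> (n - 2)"
    and "\<forall>j. 0 < j \<and> j < n - 1 \<longrightarrow> 6 * \<pi> j = \<pi> (j - 1) + \<pi> (j + 1)"
proof -
  show "5 * \<pi> (n - 1) = \<pi> (n - 2)"
    using assms by (simp add: \<pi>_def Suc_diff_Suc numeral_2_eq_2)
  show "\<forall>j. 0 < j \<and> j < n - 1 \<longrightarrow> 6 * \<pi> j = \<pi> (j - 1) + \<pi> (j + 1)"
  proof safe
    fix j assume "0 < j" "j < n - 1"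
    then obtain k where "n - j = Suc (Suc k)" "n - Suc j = Suc k" "n - Suc (Suc j) = k"
      by (intro that[of "n - j - 2"]) auto
    then show "6 * \<pi> j = \<pi> (j - 1) + \<pi> (j + 1)"
      using \<open>0 < j\<close> by (simp add: \<pi>_def balancing_gap_rec algebra_simps)
  qed
qed

lemma stationary_prob_trans_P_gap_profile:
  assumes "3 \<le> n"
  shows "stationary_prob n (trans_P n)
           (\<lambda>i. of_int (balancing_gap (n - Suc i)) / of_int (balancing n))"
proof -
  define B where "B = real_of_int (balancing n)"
  define \<pi> where "\<pi> = (\<lambda>i. of_int (balancing_gap (n - Suc i)) / B)"
  have "0 < B"
    using balancing_ge[of n] assms unfolding B_def by simp
  have "0 \<le> real_of_int (balancing_gap k)" for k
    using balancing_gap_ge_1[of k] by simp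
  with \<open>0 < B\<close> have "\<forall>i<n. 0 \<le> \<pi> i"
    unfolding \<pi>_def by simp
  moreover have "(\<Sum>i<n. \<pi> i) = 1"
    using \<open>0 < B\<close> unfolding \<pi>_def B_def
    by (simp add: sum_balancing_gap_rev flip: sum_divide_distrib of_int_sum)
  moreover have "5 * \<pi> 0 = 4 + \<pi> 1"
  proof -
    define m where "m = n - 2"
    have n: "n = Suc (Suc m)"
      using assms unfolding m_def by simp
    have "5 * real_of_int (balancing_gap (Suc m)) = 4 * B + of_int (balancing_gap m)"
      unfolding B_def n using five_times_balancing_gap_Suc[of m] by linarith
    with \<open>0 < B\<close> show ?thesis
      unfolding \<pi>_def n by (simp add: field_simps)
  qed
  moreover have "\<pi> = (\<lambda>i. 1 / B * of_int (balancing_gap (n - Suc i)))"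
    unfolding \<pi>_def by simp
  then have "5 * \<pi> (n - 1) = \<pi> (n - 2)"
    and "\<forall>j. 0 < j \<and> j < n - 1 \<longrightarrow> 6 * \<pi> j = \<pi> (j - 1) + \<pi> (j + 1)"
    using gap_profile_solves_balance_recurrence[of n "1 / B"] assms by simp_all
  ultimately have "stationary_prob n (trans_P n) \<pi>"
    unfolding stationary_prob_trans_P_iff[OF assms] by blast
  then show ?thesis
    unfolding \<pi>_def B_def .
qed

lemma stationary_prob_trans_P_unique:
  assumes "3 \<le> n" "stationary_prob n (trans_P n) \<pi>" "i < n"
  shows "\<pi> i = of_int (balancing_gap (n - Suc i)) / of_int (balancing n)"
proof -
  define c where "c = \<pi> (n - 1)"
  have "(\<Sum>i<n. \<pi> i) = 1" and last: "5 * \<pi> (n - 1) = \<pi> (n - 2)"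
    and interior: "\<forall>j. 0 < j \<and> j < n - 1 \<longrightarrow> 6 * \<pi> j = \<pi> (j - 1) + \<pi> (j + 1)"
    using assms(2) unfolding stationary_prob_trans_P_iff[OF assms(1)] by blast+
  have profile: "\<pi> i = c * of_int (balancing_gap (n - Suc i))" if "i < n" for i
    using balance_recurrence_solution[OF last interior _ that] assms(1) unfolding c_def by simp
  have "1 = (\<Sum>i<n. c * of_int (balancing_gap (n - Suc i)))"
    using \<open>(\<Sum>i<n. \<pi> i) = 1\<close> profile by simp
  also have "\<dots> = c * of_int (balancing n)"
    by (simp add: sum_balancing_gap_rev flip: sum_distrib_left of_int_sum)
  moreover have "0 < real_of_int (balancing n)"
    using balancing_ge[of n] assms(1) by simp
  ultimately have "c = 1 / of_int (balancing n)"
    by (simp add: field_simps)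
  with profile[OF \<open>i < n\<close>] show ?thesis
    by simp
qed

theorem theorem2p3:
  fixes n :: nat
  assumes "n \<ge> 3"
  shows "(\<exists>\<pi>. stationary_prob n (trans_P n) \<pi>) \<and>
         (\<forall>\<pi>. stationary_prob n (trans_P n) \<pi> \<longrightarrow>
           (\<forall>i<n. \<pi> i = real_of_int (balancing (n - i) - balancing (n - i - 1))
                             / real_of_int (balancing n)))"
proof -
  have "balancing_gap (n - Suc i) = balancing (n - i) - balancing (n - i - 1)" if "i < n" for i
    using that by (simp add: balancing_gap_def Suc_diff_Suc)
  then show ?thesis
    using stationary_prob_trans_P_gap_profile[OF assms] stationary_prob_trans_P_unique[OF assms]
    by auto
qed

end
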